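(* If $L$ is a finite ranked lattice, then $$\mathcal{M}(L,t)=t^{\mathrm{rk}(L)}\sum_{y\in L}t^{\mathrm{rk}(L)-\mathrm{rk}(y)}\,\chi(L^y,t)\,\chi\big((L^{\mathrm{op}})^y,t^{-1}\big).$$
   Context: $L$ has minimum $\hat 0$, maximum $\hat 1$, rank function $\mathrm{rk}$ with $\mathrm{rk}(\hat 0)=0$, and $\mathrm{rk}(L)=\mathrm{rk}(\hat 1)$. $L^{\mathrm{op}}$ is $L$ with reversed order. For $y\in L$, $L^y=\{x\in L: x\ge y\}$ and $(L^{\mathrm{op}})^y=\{x\in L: x\le y\}$ ordered by the reverse of the order of $L$. For a finite ranked lattice $K$ with minimum $\hat 0_K$ and Möbius function $\mu_K$ ($\mu_K(u,u)=1$, $\sum_{u\le a\le v}\mu_K(u,a)=0$ for $u<v$), the characteristic polynomial is $\chi(K,t)=\sum_{x\in K}\mu_K(\hat 0_K,x)\,t^{\mathrm{rk}(K)-\mathrm{rk}_K(x)}$, where $\mathrm{rk}_K$ is the rank function of $K$ (with $\mathrm{rk}_K(\hat 0_K)=0$) and $\mathrm{rk}(K)$ its maximum. Let $\rho(x,y,z)=3\,\mathrm{rk}(L)-\mathrm{rk}(x)-\mathrm{rk}(y)-\mathrm{rk}(z)$, $\delta_3(x,y,z)=1$ if $x=y=z$ and $0$ otherwise, $J$ the unique integer-valued function on triples $x\le y\le z$ of $L$ with $\sum_{x\le a\le y\le b\le z}J(a,y,b)=\delta_3(x,y,z)$ for all $x\le y\le z$, and $\mathcal{M}(L,t)=\sum_{x\le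 y\le z}J(x,y,z)\,t^{\rho(x,y,z)}$. *)

theory Defs
  imports Main
begin

definition mobius_on :: "'a set \<Rightarrow> ('a \<Rightarrow> 'a \<Rightarrow> bool) \<Rightarrow> 'a \<Rightarrow> 'a \<Rightarrow> int" where
  "mobius_on S le = (THE m.
      (\<forall>u\<in>S. \<forall>v\<in>S. le u v \<longrightarrow>
          (u = v \<longrightarrow> m u v = 1) \<and>
          (u \<noteq> v \<longrightarrow> (\<Sum>a\<in>{a\<in>S. le u a \<and> le a v}. m u a) = 0)) \<and>
      (\<forall>u v. \<not> (u \<in> S \<and> v \<in> S \<and> le u v) \<longrightarrow> m u v = 0))"

definition rank_on :: "'a set \<Rightarrow> ('a \<Rightarrow> 'a \<Rightarrow> bool) \<Rightarrow> 'a \<Rightarrow> 'a \<Rightarrow> nat" where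
  "rank_on S le z x = Max {n. \<exists>c :: nat \<Rightarrow> 'a. c 0 = z \<and> c n = x \<and>
       (\<forall>i\<le>n. c i \<in> S) \<and> (\<forall>i<n. le (c i) (c (Suc i)) \<and> c i \<noteq> c (Suc i))}"

definition charpoly_on :: "'a set \<Rightarrow> ('a \<Rightarrow> 'a \<Rightarrow> bool) \<Rightarrow> 'a \<Rightarrow> 'b::field \<Rightarrow> 'b" where
  "charpoly_on S le z t =
     (\<Sum>x\<in>S. of_int (mobius_on S le z x) *
        t ^ (Max (rank_on S le z ` S) - rank_on S le z x))"

definition covers :: "'a::order \<Rightarrow> 'a \<Rightarrow> bool" where
  "covers x y \<longleftrightarrow> x < y \<and> \<not> (\<exists>w. x < w \<and> w < y)"

definition rank_function :: "('a::bounded_lattice \<Rightarrow> nat) \<Rightarrow> bool" where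
  "rank_function rk \<longleftrightarrow> rk bot = 0 \<and> (\<forall>x y. covers x y \<longrightarrow> rk y = rk x + 1)"

definition Jfun :: "'a::order \<Rightarrow> 'a \<Rightarrow> 'a \<Rightarrow> int" where
  "Jfun = (THE J.
      (\<forall>x y z. x \<le> y \<and> y \<le> z \<longrightarrow>
         (\<Sum>a\<in>{a. x \<le> a \<and> a \<le> y}. \<Sum>b\<in>{b. y \<le> b \<and> b \<le> z}. J a y b)
           = (if x = y \<and> y = z then 1 else 0)) \<and>
      (\<forall>x y z. \<not> (x \<le> y \<and> y \<le> z) \<longrightarrow> J x y z = 0))"

definition Mpoly :: "('a::{finite,bounded_lattice} \<Rightarrow> nat) \<Rightarrow> 'b::field \<Rightarrow> 'b" where
  "Mpoly rk t = (\<Sum>(x,y,z)\<in>{(x,y,z). x \<le> y \<and> y \<le> z}.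
      of_int (Jfun x y z) * t ^ (3 * rk top - rk x - rk y - rk z))"

end

theory Submission
  imports Defs
begin

(* Write mu = mobius and mu' = mobius_dual for the Moebius function of L computed by the
   recursion in the second and in the first argument.
   For J = mu' * mu the defining double sum of J at (x, y, z) factors as
   (sum_{x<=a<=y} mu'(a, y)) (sum_{y<=b<=z} mu(y, b)) = delta(x, y) delta(y, z), and J is unique
   because the zeta transform of a finite poset is injective; hence J(x, y, z) = mu'(x, y) mu(y, z).
   Grouping M(L, t) by the middle element y, the sum over z >= y is chi(L^y, t), since the Moebius
   function of L^y is the restriction of mu and its rank function is rk - rk y. Symmetrically the
   sum over x <= y is t^rk(L) chi((L^op)^y, 1/t): the Moebius function of (L^op)^y is the
   restriction of mu' and its rank function is rk y - rk. *)

function mobius :: "'a::{finite,order} \<Rightarrow> 'a \<Rightarrow> int" where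
  "mobius u v = (if u = v then 1 else if u \<le> v then - (\<Sum>a\<in>{u..<v}. mobius u a) else 0)"
  by auto
termination
  by (relation "measure (\<lambda>(u, v). card {..<v})") (auto intro: psubset_card_mono)

function mobius_dual :: "'a::{finite,order} \<Rightarrow> 'a \<Rightarrow> int" where
  "mobius_dual u v = (if u = v then 1 else if u \<le> v then - (\<Sum>a\<in>{u<..v}. mobius_dual a v) else 0)"
  by auto
termination
  by (relation "measure (\<lambda>(u, v). card {u<..})") (auto intro: psubset_card_mono)

declare mobius.simps [simp del] mobius_dual.simps [simp del]

lemma sum_mobius:
  fixes u v :: "'a::{finite,order}"
  assumes "u \<le> v"
  shows "(\<Sum>a\<in>{u..v}. mobius u a) = (if u = v then 1 else 0)"
proof -
  have "{u..v} = insert v {u..<v}" using assms by auto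
  then show ?thesis using assms by (simp add: mobius.simps[of u v] mobius.simps[of u u])
qed

lemma sum_mobius_dual:
  fixes u v :: "'a::{finite,order}"
  assumes "u \<le> v"
  shows "(\<Sum>a\<in>{u..v}. mobius_dual a v) = (if u = v then 1 else 0)"
proof -
  have "{u..v} = insert u {u<..v}" using assms by auto
  then show ?thesis using assms by (simp add: mobius_dual.simps[of u v] mobius_dual.simps[of v v])
qed

lemma interval_sums_eq_imp_eq:
  fixes le :: "'a \<Rightarrow> 'a \<Rightarrow> bool" and f g :: "'a \<Rightarrow> 'b::cancel_comm_monoid_add"
  assumes "finite S" and "u \<in> S"
    and le_refl: "\<And>a. a \<in> S \<Longrightarrow> le a a"
    and le_trans: "\<And>a b c. a \<in> S \<Longrightarrow> b \<in> S \<Longrightarrow> c \<in> S \<Longrightarrow> le a b \<Longrightarrow> le b c \<Longrightarrow> le a c"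
    and le_antisym: "\<And>a b. a \<in> S \<Longrightarrow> b \<in> S \<Longrightarrow> le a b \<Longrightarrow> le b a \<Longrightarrow> a = b"
    and sums: "\<And>w. w \<in> S \<Longrightarrow> le u w \<Longrightarrow>
      (\<Sum>a\<in>{a\<in>S. le u a \<and> le a w}. f a) = (\<Sum>a\<in>{a\<in>S. le u a \<and> le a w}. g a)"
  shows "v \<in> S \<Longrightarrow> le u v \<Longrightarrow> f v = g v"
proof (induction "card {a\<in>S. le u a \<and> le a v}" arbitrary: v rule: less_induct)
  case less
  let ?I = "\<lambda>w. {a\<in>S. le u a \<and> le a w}"
  have below: "f w = g w" if w: "w \<in> ?I v - {v}" for w
  proof -
    have "?I w \<subseteq> ?I v" using w less.prems \<open>u \<in> S\<close> le_trans by blast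
    moreover have "v \<notin> ?I w" using w less.prems le_antisym by blast
    moreover have "v \<in> ?I v" using less.prems le_refl by blast
    ultimately have "card (?I w) < card (?I v)"
      using \<open>finite S\<close> by (intro psubset_card_mono) auto
    then show ?thesis using w less.hyps by blast
  qed
  have v: "v \<in> ?I v" using less.prems le_refl by blast
  have "f v + (\<Sum>a\<in>?I v - {v}. f a) = g v + (\<Sum>a\<in>?I v - {v}. g a)"
    using sums[OF less.prems] \<open>finite S\<close> sum.remove[OF _ v, of f] sum.remove[OF _ v, of g] by simp
  moreover have "(\<Sum>a\<in>?I v - {v}. f a) = (\<Sum>a\<in>?I v - {v}. g a)"
    using below by (rule sum.cong[OF HOL.refl])
  ultimately show ?case by simp
qed

lemma mobius_on_eqI:
  assumes "finite S"
    and le_refl: "\<And>a. a \<in> S \<Longrightarrow> le a a"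
    and le_trans: "\<And>a b c. a \<in> S \<Longrightarrow> b \<in> S \<Longrightarrow> c \<in> S \<Longrightarrow> le a b \<Longrightarrow> le b c \<Longrightarrow> le a c"
    and le_antisym: "\<And>a b. a \<in> S \<Longrightarrow> b \<in> S \<Longrightarrow> le a b \<Longrightarrow> le b a \<Longrightarrow> a = b"
    and diag: "\<And>u. u \<in> S \<Longrightarrow> m u u = 1"
    and sums: "\<And>u v. u \<in> S \<Longrightarrow> v \<in> S \<Longrightarrow> le u v \<Longrightarrow> u \<noteq> v \<Longrightarrow>
      (\<Sum>a\<in>{a\<in>S. le u a \<and> le a v}. m u a) = 0"
    and outside: "\<And>u v. \<not> (u \<in> S \<and> v \<in> S \<and> le u v) \<Longrightarrow> m u v = 0"
  shows "mobius_on S le = m"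
  unfolding mobius_on_def
proof (rule the_equality, goal_cases)
  case 1
  show ?case using diag sums outside by simp
next
  case (2 m')
  note m'_sums = 2[THEN conjunct1, rule_format] and m'_outside = 2[THEN conjunct2, rule_format]
  have "m' u v = m u v" for u v
  proof (cases "u \<in> S \<and> v \<in> S \<and> le u v")
    case True
    have sums_eq: "(\<Sum>a\<in>{a\<in>S. le u a \<and> le a w}. m' u a) = (\<Sum>a\<in>{a\<in>S. le u a \<and> le a w}. m u a)"
      if "w \<in> S" "le u w" for w
    proof (cases "u = w")
      case True
      then have "{a\<in>S. le u a \<and> le a w} = {w}" using that le_refl le_antisym by blast
      then show ?thesis using m'_sums diag that \<open>u = w\<close> by simp
    next
      case False
      with m'_sums True that have "(\<Sum>a\<in>{a\<in>S. le u a \<and> le a w}. m' u a) = 0" by blast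
      moreover have "(\<Sum>a\<in>{a\<in>S. le u a \<and> le a w}. m u a) = 0"
        using sums False True that by blast
      ultimately show ?thesis by simp
    qed
    from True have uv: "u \<in> S" "v \<in> S" "le u v" by auto
    show ?thesis
      by (rule interval_sums_eq_imp_eq[where le = le and S = S])
        (fact uv sums_eq \<open>finite S\<close> le_refl le_trans le_antisym)+
  next
    case False
    then show ?thesis using m'_outside outside by simp
  qed
  then show ?case by blast
qed

lemma mobius_on_order_convex:
  fixes S :: "'a::{finite,order} set"
  assumes convex: "\<And>u v. u \<in> S \<Longrightarrow> v \<in> S \<Longrightarrow> {u..v} \<subseteq> S"
  shows "mobius_on S (\<le>) u v = (if u \<in> S \<and> v \<in> S \<and> u \<le> v then mobius u v else 0)"
proof -
  have "mobius_on S (\<le>) = (\<lambda>u v. if u \<in> S \<and> v \<in> S \<and> u \<le> v then mobius u v else 0)"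
  proof (rule mobius_on_eqI)
    fix u v assume "u \<in> S" "v \<in> S" "u \<le> v" "u \<noteq> v"
    moreover from this have "{a \<in> S. u \<le> a \<and> a \<le> v} = {u..v}" using convex by auto
    moreover have "(\<Sum>a\<in>{u..v}. if u \<in> S \<and> a \<in> S \<and> u \<le> a then mobius u a else 0) =
        (\<Sum>a\<in>{u..v}. mobius u a)"
      using convex[of u v] \<open>u \<in> S\<close> \<open>v \<in> S\<close> by (intro sum.cong) auto
    ultimately show
      "(\<Sum>a\<in>{a \<in> S. u \<le> a \<and> a \<le> v}. if u \<in> S \<and> a \<in> S \<and> u \<le> a then mobius u a else 0) = 0"
      using sum_mobius[of u v] by simp
  qed (auto simp: mobius.simps)
  then show ?thesis by simp
qed

lemma mobius_on_converse_order_convex: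
  fixes S :: "'a::{finite,order} set"
  assumes convex: "\<And>u v. u \<in> S \<Longrightarrow> v \<in> S \<Longrightarrow> {u..v} \<subseteq> S"
  shows "mobius_on S (\<lambda>a b. b \<le> a) u v = (if u \<in> S \<and> v \<in> S \<and> v \<le> u then mobius_dual v u else 0)"
proof -
  have "mobius_on S (\<lambda>a b. b \<le> a) = (\<lambda>u v. if u \<in> S \<and> v \<in> S \<and> v \<le> u then mobius_dual v u else 0)"
  proof (rule mobius_on_eqI)
    fix u v assume "u \<in> S" "v \<in> S" "v \<le> u" "u \<noteq> v"
    moreover from this have "{a \<in> S. a \<le> u \<and> v \<le> a} = {v..u}" using convex by auto
    moreover have "(\<Sum>a\<in>{v..u}. if u \<in> S \<and> a \<in> S \<and> a \<le> u then mobius_dual a u else 0) =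
        (\<Sum>a\<in>{v..u}. mobius_dual a u)"
      using convex[of v u] \<open>u \<in> S\<close> \<open>v \<in> S\<close> by (intro sum.cong) auto
    ultimately show "(\<Sum>a\<in>{a \<in> S. a \<le> u \<and> v \<le> a}.
        if u \<in> S \<and> a \<in> S \<and> a \<le> u then mobius_dual a u else 0) = 0"
      using sum_mobius_dual[of v u] by simp
  qed (auto simp: mobius_dual.simps)
  then show ?thesis by simp
qed

lemma double_interval_sums_eq_imp_eq:
  fixes F G :: "'a::{finite,order} \<Rightarrow> 'a \<Rightarrow> 'b::cancel_comm_monoid_add"
  assumes sums: "\<And>x z. x \<le> y \<Longrightarrow> y \<le> z \<Longrightarrow>
      (\<Sum>a\<in>{x..y}. \<Sum>b\<in>{y..z}. F a b) = (\<Sum>a\<in>{x..y}. \<Sum>b\<in>{y..z}. G a b)"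
    and "x \<le> y" "y \<le> z"
  shows "F x z = G x z"
proof -
  have down: "{a. a \<le> y \<and> x \<le> a} = {x..y}" for x by auto
  have up: "{b. y \<le> b \<and> b \<le> c} = {y..c}" for c by auto
  have partial_sums: "(\<Sum>b\<in>{y..c}. F a b) = (\<Sum>b\<in>{y..c}. G a b)" if "a \<le> y" "y \<le> c" for a c
    by (rule interval_sums_eq_imp_eq[where S = "{..y}" and le = "\<lambda>a b. b \<le> a" and u = y
          and f = "\<lambda>a. \<Sum>b\<in>{y..c}. F a b" and g = "\<lambda>a. \<Sum>b\<in>{y..c}. G a b"])
      (use that sums in \<open>auto simp: down\<close>)
  show ?thesis
    by (rule interval_sums_eq_imp_eq[where S = "{y..}" and le = "(\<le>)" and u = y
          and f = "F x" and g = "G x"])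
      (use assms partial_sums in \<open>auto simp: up\<close>)
qed

lemma Jfun_eq_mobius:
  "(Jfun :: 'a::{finite,order} \<Rightarrow> 'a \<Rightarrow> 'a \<Rightarrow> int) =
     (\<lambda>x y z. if x \<le> y \<and> y \<le> z then mobius_dual x y * mobius y z else 0)"
  (is "_ = ?J")
proof -
  have ivl: "{a. x \<le> a \<and> a \<le> y} = {x..y}" for x y :: 'a by auto
  have J_sums: "(\<Sum>a\<in>{x..y}. \<Sum>b\<in>{y..z}. ?J a y b) = (if x = y \<and> y = z then 1 else 0)"
    if "x \<le> y" "y \<le> z" for x y z :: 'a
  proof -
    have "(\<Sum>a\<in>{x..y}. \<Sum>b\<in>{y..z}. ?J a y b) =
        (\<Sum>a\<in>{x..y}. mobius_dual a y) * (\<Sum>b\<in>{y..z}. mobius y b)"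
      by (simp add: sum_product)
    then show ?thesis using that by (simp add: sum_mobius sum_mobius_dual)
  qed
  show ?thesis
    unfolding Jfun_def ivl
  proof (rule the_equality, goal_cases)
    case 1
    show ?case using J_sums by simp
  next
    case (2 J)
    have "J x y z = ?J x y z" for x y z
    proof (cases "x \<le> y \<and> y \<le> z")
      case True
      show ?thesis
      proof (rule double_interval_sums_eq_imp_eq
          [where y = y and F = "\<lambda>a b. J a y b" and G = "\<lambda>a b. ?J a y b"])
        fix a c assume ac: "a \<le> y" "y \<le> c"
        with 2 have "(\<Sum>a'\<in>{a..y}. \<Sum>b\<in>{y..c}. J a' y b) = (if a = y \<and> y = c then 1 else 0)"
          by blast
        with J_sums[OF ac] show "(\<Sum>a'\<in>{a..y}. \<Sum>b\<in>{y..c}. J a' y b) =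
            (\<Sum>a'\<in>{a..y}. \<Sum>b\<in>{y..c}. ?J a' y b)"
          by argo
      qed (use True in auto)
    qed (use 2 in auto)
    then show ?case by blast
  qed
qed

lemma rank_function_chain:
  fixes rk :: "'a::{finite,bounded_lattice} \<Rightarrow> nat"
  assumes rk: "rank_function rk" and "x \<le> y"
  shows "\<exists>c n. c 0 = x \<and> c n = y \<and> rk y = rk x + n \<and>
    (\<forall>i<n. c i < c (Suc i)) \<and> (\<forall>i\<le>n. c i \<in> {x..y})"
  using \<open>x \<le> y\<close>
proof (induction "card {x..y}" arbitrary: y rule: less_induct)
  case less
  show ?case
  proof (cases "x = y")
    case True
    then show ?thesis by (intro exI[of _ "\<lambda>_. x"] exI[of _ 0]) simp
  next
    case False
    have "{x..<y} \<noteq> {}" using False less.prems by auto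
    then obtain w where w: "w \<in> {x..<y}" and w_max: "\<forall>b\<in>{x..<y}. w \<le> b \<longrightarrow> w = b"
      using finite_has_maximal[OF finite] by blast
    have "\<not> (w < v \<and> v < y)" for v
    proof
      assume wv: "w < v \<and> v < y"
      then have "v \<in> {x..<y}" using w by auto
      with w_max wv show False by (auto simp: order.strict_iff_order)
    qed
    with w have "covers w y" by (auto simp: covers_def)
    then have rk_y: "rk y = rk w + 1" using rk by (simp add: rank_function_def)
    have card_less: "card {x..w} < card {x..y}"
      using w by (intro psubset_card_mono) auto
    have "x \<le> w" using w by simp
    obtain d m where d: "d 0 = x" "d m = w" "rk w = rk x + m"
        "\<forall>i<m. d i < d (Suc i)" "\<forall>i\<le>m. d i \<in> {x..w}"
      using less.hyps[OF card_less \<open>x \<le> w\<close>] by blast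
    show ?thesis
    proof (intro exI conjI)
      let ?c = "d(Suc m := y)"
      show "?c 0 = x" "?c (Suc m) = y" "rk y = rk x + Suc m" using d rk_y by simp_all
      show "\<forall>i<Suc m. ?c i < ?c (Suc i)"
        using d w by (auto simp: less_Suc_eq)
      show "\<forall>i\<le>Suc m. ?c i \<in> {x..y}"
        using d w less.prems by (auto simp: le_Suc_eq intro: order.trans)
    qed
  qed
qed

lemma strict_mono_chain_length:
  fixes f :: "'a::order \<Rightarrow> nat"
  assumes "strict_mono f" and "\<forall>i<n. c i < c (Suc i)"
  shows "f (c 0) + n \<le> f (c n)"
  using assms(2)
proof (induction n)
  case (Suc n)
  then show ?case using strict_monoD[OF assms(1), of "c n" "c (Suc n)"] by simp
qed simp

lemma strict_mono_chain_length_desc: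
  fixes f :: "'a::order \<Rightarrow> nat"
  assumes "strict_mono f" and "\<forall>i<n. c (Suc i) < c i"
  shows "f (c n) + n \<le> f (c 0)"
  using assms(2)
proof (induction n)
  case (Suc n)
  then show ?case using strict_monoD[OF assms(1), of "c (Suc n)" "c n"] by simp
qed simp

lemma rank_function_strict_mono:
  fixes rk :: "'a::{finite,bounded_lattice} \<Rightarrow> nat"
  assumes "rank_function rk"
  shows "strict_mono rk"
proof (rule strict_monoI)
  fix x y :: 'a
  assume "x < y"
  then obtain c n where "c 0 = x" "c n = y" "rk y = rk x + n"
    using rank_function_chain[OF assms less_imp_le[OF \<open>x < y\<close>]] by blast
  with \<open>x < y\<close> show "rk x < rk y" by (cases n) auto
qed

lemma rank_function_mono:
  fixes rk :: "'a::{finite,bounded_lattice} \<Rightarrow> nat"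
  assumes "rank_function rk"
  shows "mono rk"
  using assms by (intro strict_mono_mono rank_function_strict_mono)

lemma rank_on_atLeast:
  fixes rk :: "'a::{finite,bounded_lattice} \<Rightarrow> nat"
  assumes rk: "rank_function rk" and "y \<le> x"
  shows "rank_on {y..} (\<le>) y x = rk x - rk y"
  unfolding rank_on_def
proof (rule Max_eqI)
  let ?A = "{n. \<exists>c. c 0 = y \<and> c n = x \<and> (\<forall>i\<le>n. c i \<in> {y..}) \<and>
      (\<forall>i<n. c i \<le> c (Suc i) \<and> c i \<noteq> c (Suc i))}"
  show bound: "n \<le> rk x - rk y" if "n \<in> ?A" for n
  proof -
    from that obtain c where c: "c 0 = y" "c n = x" "\<forall>i<n. c i < c (Suc i)"
      by (auto simp: order.strict_iff_order)
    with strict_mono_chain_length[OF rank_function_strict_mono[OF rk] c(3)] show ?thesis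
      by simp
  qed
  show "finite ?A" using bound by (meson atMost_iff finite_atMost finite_subset subsetI)
  obtain c n where "c 0 = y" "c n = x" "rk x = rk y + n"
      "\<forall>i<n. c i < c (Suc i)" "\<forall>i\<le>n. c i \<in> {y..x}"
    using rank_function_chain[OF rk \<open>y \<le> x\<close>] by blast
  then show "rk x - rk y \<in> ?A"
    by (auto simp: order.strict_iff_order intro!: exI[of _ c])
qed

lemma rank_on_atMost_converse:
  fixes rk :: "'a::{finite,bounded_lattice} \<Rightarrow> nat"
  assumes rk: "rank_function rk" and "x \<le> y"
  shows "rank_on {..y} (\<lambda>a b. b \<le> a) y x = rk y - rk x"
  unfolding rank_on_def
proof (rule Max_eqI)
  let ?A = "{n. \<exists>c. c 0 = y \<and> c n = x \<and> (\<forall>i\<le>n. c i \<in> {..y}) \<and>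
      (\<forall>i<n. c (Suc i) \<le> c i \<and> c i \<noteq> c (Suc i))}"
  show bound: "n \<le> rk y - rk x" if "n \<in> ?A" for n
  proof -
    from that obtain c where c: "c 0 = y" "c n = x" "\<forall>i<n. c (Suc i) \<le> c i \<and> c i \<noteq> c (Suc i)"
      by blast
    then have "\<forall>i<n. c (Suc i) < c i" by (auto simp: order.strict_iff_order)
    with strict_mono_chain_length_desc[OF rank_function_strict_mono[OF rk] this] c show ?thesis
      by simp
  qed
  show "finite ?A" using bound by (meson atMost_iff finite_atMost finite_subset subsetI)
  obtain d n where d: "d 0 = x" "d n = y" "rk y = rk x + n"
      "\<forall>i<n. d i < d (Suc i)" "\<forall>i\<le>n. d i \<in> {x..y}"
    using rank_function_chain[OF rk \<open>x \<le> y\<close>] by blast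
  have "d (n - Suc i) < d (n - i)" if "i < n" for i
    using d(4)[rule_format, of "n - Suc i"] that by (simp add: Suc_diff_Suc)
  then have "\<forall>i<n. d (n - Suc i) \<le> d (n - i) \<and> d (n - i) \<noteq> d (n - Suc i)"
    by (simp add: less_imp_le dual_order.strict_implies_not_eq)
  moreover have "\<forall>i\<le>n. d (n - i) \<in> {..y}" using d(5) by simp
  ultimately show "rk y - rk x \<in> ?A"
    using d(1-3) by (intro CollectI exI[of _ "\<lambda>i. d (n - i)"]) simp
qed

lemma charpoly_on_atLeast:
  fixes rk :: "'a::{finite,bounded_lattice} \<Rightarrow> nat" and t :: "'b::field"
  assumes rk: "rank_function rk"
  shows "charpoly_on {y..} (\<le>) y t = (\<Sum>x\<in>{y..}. of_int (mobius y x) * t ^ (rk top - rk x))"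
proof -
  note mono = monoD[OF rank_function_mono[OF rk]]
  have "rank_on {y..} (\<le>) y ` {y..} = (\<lambda>x. rk x - rk y) ` {y..}"
    using rank_on_atLeast[OF rk] by (intro image_cong) auto
  also have "Max \<dots> = rk top - rk y"
    using mono by (intro Max_eqI) (auto intro!: diff_le_mono image_eqI[of _ _ top])
  finally have "Max (rank_on {y..} (\<le>) y ` {y..}) = rk top - rk y" .
  moreover have "mobius_on {y..} (\<le>) y x = mobius y x" if "y \<le> x" for x
    using that by (subst mobius_on_order_convex) auto
  ultimately show ?thesis
    unfolding charpoly_on_def
    using mono rank_on_atLeast[OF rk] by (intro sum.cong) auto
qed

lemma charpoly_on_atMost_converse:
  fixes rk :: "'a::{finite,bounded_lattice} \<Rightarrow> nat" and t :: "'b::field"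
  assumes rk: "rank_function rk"
  shows "charpoly_on {..y} (\<lambda>a b. b \<le> a) y t = (\<Sum>x\<in>{..y}. of_int (mobius_dual x y) * t ^ rk x)"
proof -
  note mono = monoD[OF rank_function_mono[OF rk]]
  have "rank_on {..y} (\<lambda>a b. b \<le> a) y ` {..y} = (\<lambda>x. rk y - rk x) ` {..y}"
    using rank_on_atMost_converse[OF rk] by (intro image_cong) auto
  also have "Max \<dots> = rk y"
    using rk by (intro Max_eqI) (auto simp: rank_function_def intro!: image_eqI[of _ _ bot])
  finally have "Max (rank_on {..y} (\<lambda>a b. b \<le> a) y ` {..y}) = rk y" .
  moreover have "mobius_on {..y} (\<lambda>a b. b \<le> a) y x = mobius_dual x y" if "x \<le> y" for x
    using that by (subst mobius_on_converse_order_convex) auto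
  ultimately show ?thesis
    unfolding charpoly_on_def
    using mono rank_on_atMost_converse[OF rk] by (intro sum.cong) auto
qed

lemma Mpoly_eq_sum_mobius:
  fixes rk :: "'a::{finite,bounded_lattice} \<Rightarrow> nat" and t :: "'b::field"
  shows "Mpoly rk t = (\<Sum>y\<in>UNIV. \<Sum>x\<in>{..y}. \<Sum>z\<in>{y..}.
    of_int (mobius_dual x y * mobius y z) * t ^ (3 * rk top - rk x - rk y - rk z))"
proof -
  let ?f = "\<lambda>x y z. of_int (mobius_dual x y * mobius y z) * t ^ (3 * rk top - rk x - rk y - rk z)"
  have "Mpoly rk t = (\<Sum>(x, y, z)\<in>{(x, y, z). x \<le> y \<and> y \<le> z}. ?f x y z)"
    unfolding Mpoly_def Jfun_eq_mobius by (intro sum.cong) auto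
  also have "\<dots> = (\<Sum>(y, x, z)\<in>(SIGMA y:UNIV. SIGMA x:{..y}. {y..}). ?f x y z)"
    by (rule sum.reindex_bij_witness[where i = "\<lambda>(y, x, z). (x, y, z)" and j = "\<lambda>(x, y, z). (y, x, z)"])
      auto
  also have "\<dots> = (\<Sum>y\<in>UNIV. \<Sum>x\<in>{..y}. \<Sum>z\<in>{y..}. ?f x y z)"
    by (simp add: sum.Sigma split_def)
  finally show ?thesis .
qed

lemma sum_mobius_eq_charpoly_product:
  fixes rk :: "'a::{finite,bounded_lattice} \<Rightarrow> nat" and t :: "'b::field"
  assumes rk: "rank_function rk" and "t \<noteq> 0"
  shows "(\<Sum>x\<in>{..y}. \<Sum>z\<in>{y..}.
      of_int (mobius_dual x y * mobius y z) * t ^ (3 * rk top - rk x - rk y - rk z)) =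
    t ^ rk top * (t ^ (rk top - rk y) * charpoly_on {y..} (\<le>) y t
      * charpoly_on {..y} (\<lambda>a b. b \<le> a) y (inverse t))"
proof -
  let ?r = "rk top"
  let ?A = "\<lambda>z. of_int (mobius y z) * t ^ (?r - rk z)"
  let ?B = "\<lambda>x. of_int (mobius_dual x y) * inverse t ^ rk x"
  have "of_int (mobius_dual x y * mobius y z) * t ^ (3 * ?r - rk x - rk y - rk z) =
      t ^ ?r * (t ^ (?r - rk y) * (?A z * ?B x))"
    if "x \<le> y" "y \<le> z" for x z
  proof -
    have "rk x \<le> rk y" "rk y \<le> rk z" "rk z \<le> ?r"
      using that monoD[OF rank_function_mono[OF rk]] by auto
    then have "3 * ?r - rk x - rk y - rk z = (?r - rk x) + (?r - rk y) + (?r - rk z)" by simp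
    moreover have "t ^ ?r * inverse t ^ rk x = t ^ (?r - rk x)"
      using power_diff_conv_inverse[OF \<open>t \<noteq> 0\<close>, of "rk x" ?r]
        \<open>rk x \<le> rk y\<close> \<open>rk y \<le> rk z\<close> \<open>rk z \<le> ?r\<close>
      by simp
    ultimately show ?thesis by (simp add: power_add ac_simps)
  qed
  then have "(\<Sum>x\<in>{..y}. \<Sum>z\<in>{y..}.
      of_int (mobius_dual x y * mobius y z) * t ^ (3 * ?r - rk x - rk y - rk z)) =
    (\<Sum>x\<in>{..y}. \<Sum>z\<in>{y..}. t ^ ?r * (t ^ (?r - rk y) * (?A z * ?B x)))"
    by (intro sum.cong) auto
  also have "\<dots> = t ^ ?r * (t ^ (?r - rk y) * (\<Sum>x\<in>{..y}. \<Sum>z\<in>{y..}. ?A z * ?B x))"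
    by (simp add: sum_distrib_left)
  also have "(\<Sum>x\<in>{..y}. \<Sum>z\<in>{y..}. ?A z * ?B x) = sum ?A {y..} * sum ?B {..y}"
    unfolding sum_product by (rule sum.swap)
  finally show ?thesis
    by (simp add: charpoly_on_atLeast[OF rk] charpoly_on_atMost_converse[OF rk] mult.assoc)
qed

theorem proposition6p10:
  fixes rk :: "'a::{finite,bounded_lattice} \<Rightarrow> nat"
    and t :: "'b::field"
  assumes "rank_function rk"
    and "t \<noteq> 0"
  shows "Mpoly rk t =
    t ^ rk top * (\<Sum>y\<in>(UNIV :: 'a set).
       t ^ (rk top - rk y)
       * charpoly_on {x. y \<le> x} (\<le>) y t
       * charpoly_on {x. x \<le> y} (\<lambda>a b. b \<le> a) y (inverse t))"
  using sum_mobius_eq_charpoly_product[OF assms]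
  by (simp add: Mpoly_eq_sum_mobius sum_distrib_left atLeast_def atMost_def)

end
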